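(* Let $K$ be a compact metrizable space of topological dimension at most $1$, and let $J$ be a compact subset of $K$. Let $B$ be a uniform algebra on $J$ with dense invertibles, and let $A=\{f\in C(K): f|_J\in B\}$. Then $A$ has dense invertibles.
   Context: A uniform algebra on a compact Hausdorff space $J$ is a closed subalgebra of $C(J)$ (supremum norm) containing the constants and separating points. A uniform algebra has dense invertibles if its invertible elements are dense in it. Topological dimension means Lebesgue covering dimension. *)

theory Defs
  imports "HOL-Analysis.Analysis"
begin

text \<open>Functions on a set S are represented by total functions 'a => complex;
  only their values on S matter. An "algebra on S" is a set of such functions
  that is saturated w.r.t. equality on S.\<close>

definition restr_saturated :: "'a set \<Rightarrow> ('a \<Rightarrow> complex) set \<Rightarrow> bool" where
  "restr_saturated S B \<longleftrightarrow> (\<forall>f g. f \<in> B \<and> (\<forall>x\<in>S. f x = g x) \<longrightarrow> g \<in> B)"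

definition uniform_algebra :: "'a::topological_space set \<Rightarrow> ('a \<Rightarrow> complex) set \<Rightarrow> bool" where
  "uniform_algebra J B \<longleftrightarrow>
     restr_saturated J B \<and>
     (\<forall>f\<in>B. continuous_on J f) \<and>
     (\<forall>c. (\<lambda>x. c) \<in> B) \<and>
     (\<forall>f\<in>B. \<forall>g\<in>B. (\<lambda>x. f x + g x) \<in> B \<and> (\<lambda>x. f x * g x) \<in> B) \<and>
     (\<forall>c. \<forall>f\<in>B. (\<lambda>x. c * f x) \<in> B) \<and>
     (\<forall>f. continuous_on J f \<and> (\<forall>e>0. \<exists>g\<in>B. \<forall>x\<in>J. norm (f x - g x) < e) \<longrightarrow> f \<in> B) \<and>
     (\<forall>x\<in>J. \<forall>y\<in>J. x \<noteq> y \<longrightarrow> (\<exists>f\<in>B. f x \<noteq> f y))"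

definition invertible_in :: "'a set \<Rightarrow> ('a \<Rightarrow> complex) set \<Rightarrow> ('a \<Rightarrow> complex) \<Rightarrow> bool" where
  "invertible_in S A g \<longleftrightarrow> g \<in> A \<and> (\<exists>h\<in>A. \<forall>x\<in>S. g x * h x = 1)"

definition dense_invertibles :: "'a set \<Rightarrow> ('a \<Rightarrow> complex) set \<Rightarrow> bool" where
  "dense_invertibles S A \<longleftrightarrow>
     (\<forall>f\<in>A. \<forall>e>0. \<exists>g. invertible_in S A g \<and> (\<forall>x\<in>S. norm (f x - g x) < e))"

text \<open>Lebesgue covering dimension at most n: every finite open cover of K has a
  finite open refinement covering K of order at most n+1.\<close>
definition covering_dim_le :: "'a::topological_space set \<Rightarrow> nat \<Rightarrow> bool" where
  "covering_dim_le K n \<longleftrightarrow>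
     (\<forall>\<U>. finite \<U> \<and> (\<forall>U\<in>\<U>. openin (top_of_set K) U) \<and> \<Union>\<U> = K \<longrightarrow>
        (\<exists>\<V>. finite \<V> \<and> (\<forall>V\<in>\<V>. openin (top_of_set K) V) \<and> \<Union>\<V> = K \<and>
             (\<forall>V\<in>\<V>. \<exists>U\<in>\<U>. V \<subseteq> U) \<and>
             (\<forall>x\<in>K. card {V\<in>\<V>. x \<in> V} \<le> n + 1)))"

end

theory Submission
  imports Defs
begin

text \<open>Approximate f on J by an invertible g0 of B and, by Tietze extension, change f by
  less than e/3 on K so that it equals g0 on J. This function is then perturbed, away from J,
  into one without zeros on K; a continuous zero-free function on K that agrees on J with an
  invertible of B is invertible in A. The perturbation is where dim K \<le> 1 enters: over a fine
  open cover of K of order at most 2, a partition of unity blends nonzero constants that are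
  pairwise non-collinear in the plane, and a positive combination of at most two non-collinear
  nonzero vectors never vanishes.\<close>

lemma interior_Union_finite_closed_empty:
  fixes \<F> :: "'b::real_normed_vector set set"
  assumes "finite \<F>" "\<And>S. S \<in> \<F> \<Longrightarrow> closed S \<and> interior S = {}"
  shows "interior (\<Union>\<F>) = {}"
  using assms
proof (induction \<F> rule: finite_induct)
  case (insert S \<F>)
  then show ?case
    using interior_closed_Un_empty_interior[of S "\<Union>\<F>"] by simp
qed simp

lemma exists_near_not_in_lines:
  fixes p :: "'b::euclidean_space"
  assumes "DIM('b) \<ge> 2" "finite F" "r > 0"
  obtains c where "dist c p < r" "c \<noteq> 0" "\<And>a. a \<in> F \<Longrightarrow> c \<notin> span {a}"
proof -
  define \<L> where "\<L> = (\<lambda>a. span {a}) ` insert 0 F"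
  have "interior (\<Union>\<L>) = {}"
  proof (rule interior_Union_finite_closed_empty)
    show "finite \<L>"
      using assms(2) by (simp add: \<L>_def)
  next
    fix L assume "L \<in> \<L>"
    then obtain a where L: "L = span {a}"
      unfolding \<L>_def by blast
    have "dim L \<le> 1"
      unfolding L dim_span using dim_le_card[of "{a}" "{a}"] by (simp add: span_base)
    then have "interior L = {}"
      using assms(1) by (intro empty_interior_lowdim) simp
    then show "closed L \<and> interior L = {}"
      using L by simp
  qed
  then have "\<not> ball p r \<subseteq> \<Union>\<L>"
    using assms(3) interior_maximal[of "ball p r" "\<Union>\<L>"] by fastforce
  then obtain c where "c \<in> ball p r" "c \<notin> \<Union>\<L>"
    by blast
  then show thesis
    by (intro that) (auto simp: \<L>_def dist_commute)
qed

lemma not_in_span_singleton_commute: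
  fixes x y :: "'b::real_vector"
  assumes "x \<notin> span {y}" "y \<noteq> 0"
  shows "y \<notin> span {x}"
proof
  assume "y \<in> span {x}"
  then obtain t where t: "y = t *\<^sub>R x"
    by (auto simp: span_singleton)
  with assms(2) have "x = inverse t *\<^sub>R y"
    by auto
  with assms(1) show False
    by (metis span_base span_scale singletonI)
qed

lemma exists_pairwise_noncollinear_near:
  fixes p :: "'i \<Rightarrow> 'b::euclidean_space"
  assumes "DIM('b) \<ge> 2" "finite I" "r > 0"
  obtains c where "\<And>i. i \<in> I \<Longrightarrow> dist (c i) (p i) < r" "\<And>i. i \<in> I \<Longrightarrow> c i \<noteq> 0"
    "\<And>i j. i \<in> I \<Longrightarrow> j \<in> I \<Longrightarrow> i \<noteq> j \<Longrightarrow> c i \<notin> span {c j}"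
proof -
  have "\<exists>c. \<forall>i\<in>I. dist (c i) (p i) < r \<and> c i \<noteq> 0 \<and> (\<forall>j\<in>I. i \<noteq> j \<longrightarrow> c i \<notin> span {c j})"
    using assms(2)
  proof (induction I rule: finite_induct)
    case (insert k I)
    then obtain c where
      c: "\<forall>i\<in>I. dist (c i) (p i) < r \<and> c i \<noteq> 0 \<and> (\<forall>j\<in>I. i \<noteq> j \<longrightarrow> c i \<notin> span {c j})"
      by blast
    obtain z where z: "dist z (p k) < r" "z \<noteq> 0" "\<And>a. a \<in> c ` I \<Longrightarrow> z \<notin> span {a}"
      using exists_near_not_in_lines[OF assms(1) finite_imageI[OF insert(1)] assms(3)] by blast
    have "c i \<notin> span {z}" if "i \<in> I" for i
      using not_in_span_singleton_commute[of z "c i"] z(3) c that by blast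
    then show ?case
      using c z insert(2) by (intro exI[of _ "c(k := z)"]) auto
  qed simp
  then show thesis
    using that by metis
qed

lemma sum_scaleR_nonzero_noncollinear:
  fixes c :: "'i \<Rightarrow> 'b::real_vector"
  assumes "finite S" "S \<noteq> {}" "card S \<le> 2"
    and "\<And>i. i \<in> S \<Longrightarrow> w i > 0" "\<And>i. i \<in> S \<Longrightarrow> c i \<noteq> 0"
    and "\<And>i j. i \<in> S \<Longrightarrow> j \<in> S \<Longrightarrow> i \<noteq> j \<Longrightarrow> c i \<notin> span {c j}"
  shows "(\<Sum>i\<in>S. w i *\<^sub>R c i) \<noteq> 0"
proof -
  have "card S = 1 \<or> card S = 2"
    using assms(1-3) card_0_eq[of S] by linarith
  then show ?thesis
  proof
    assume "card S = 1"
    then obtain i where "S = {i}"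
      by (auto simp: card_1_singleton_iff)
    then show ?thesis
      using assms(4,5) by simp
  next
    assume "card S = 2"
    then obtain i j where S: "S = {i, j}" "i \<noteq> j"
      by (auto simp: card_2_iff)
    show ?thesis
    proof
      assume "(\<Sum>i\<in>S. w i *\<^sub>R c i) = 0"
      then have "w i *\<^sub>R c i = - (w j *\<^sub>R c j)"
        using S by (simp add: eq_neg_iff_add_eq_0)
      then have "w i *\<^sub>R c i \<in> span {c j}"
        by (simp add: span_neg span_scale span_base)
      then have "inverse (w i) *\<^sub>R w i *\<^sub>R c i \<in> span {c j}"
        by (rule span_scale)
      moreover have "w i \<noteq> 0"
        using assms(4) S by fastforce
      ultimately have "c i \<in> span {c j}"
        by simp
      then show False
        using assms(6) S by auto
    qed
  qed
qed

lemma weighted_mean_in_convex_hull: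
  fixes c :: "'i \<Rightarrow> 'b::real_vector"
  assumes "finite I" "\<And>i. i \<in> I \<Longrightarrow> w i \<ge> 0" "(\<Sum>i\<in>I. w i) > 0"
  shows "inverse (\<Sum>i\<in>I. w i) *\<^sub>R (\<Sum>i\<in>I. w i *\<^sub>R c i) \<in> convex hull (c ` I)"
proof -
  have "(\<Sum>i\<in>I. (inverse (\<Sum>i\<in>I. w i) * w i) *\<^sub>R c i) \<in> convex hull (c ` I)"
  proof (rule convex_sum[OF assms(1) convex_convex_hull])
    show "(\<Sum>i\<in>I. inverse (\<Sum>i\<in>I. w i) * w i) = 1"
      using assms(3) by (simp add: sum_distrib_left[symmetric])
    show "0 \<le> inverse (\<Sum>i\<in>I. w i) * w i" if "i \<in> I" for i
      using assms(2)[OF that] assms(3) by simp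
    show "c i \<in> convex hull (c ` I)" if "i \<in> I" for i
      using that by (intro hull_inc imageI)
  qed
  then show ?thesis
    by (simp add: scaleR_sum_right)
qed

lemma infdist_lessE:
  assumes "A \<noteq> {}" "infdist x A < e"
  obtains a where "a \<in> A" "dist x a < e"
  using assms by (auto simp: infdist_notempty cINF_less_iff)

lemma openin_continuous_positive_exactly:
  fixes K V :: "'a::metric_space set"
  assumes "openin (top_of_set K) V"
  obtains w :: "'a \<Rightarrow> real" where "continuous_on K w" "\<And>x. w x \<ge> 0" "\<And>x. x \<in> K \<Longrightarrow> w x > 0 \<longleftrightarrow> x \<in> V"
proof -
  obtain U where U: "open U" "V = K \<inter> U"
    using assms by (auto simp: openin_open)
  show thesis
  proof (cases "U = UNIV")
    case True
    then show thesis
      using U by (intro that[of "\<lambda>_. 1"]) auto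
  next
    case False
    then have "- U \<noteq> {}" "closed (- U)"
      using U(1) by auto
    then have "infdist x (- U) > 0 \<longleftrightarrow> x \<in> U" for x
      by (cases "x \<in> U") (auto intro: infdist_pos_not_in_closed)
    then show thesis
      using U(2) by (intro that[of "\<lambda>x. infdist x (- U)"] continuous_on_infdist continuous_on_id) (auto simp: infdist_nonneg)
  qed
qed

lemma openin_family_continuous_positive_exactly:
  fixes K :: "'a::metric_space set"
  assumes "\<And>V. V \<in> \<V> \<Longrightarrow> openin (top_of_set K) V"
  obtains w :: "'a set \<Rightarrow> 'a \<Rightarrow> real" where "\<And>V. V \<in> \<V> \<Longrightarrow> continuous_on K (w V)"
    "\<And>V x. V \<in> \<V> \<Longrightarrow> w V x \<ge> 0" "\<And>V x. V \<in> \<V> \<Longrightarrow> x \<in> K \<Longrightarrow> w V x > 0 \<longleftrightarrow> x \<in> V"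
proof -
  have weights: "\<forall>V\<in>\<V>. \<exists>w::'a \<Rightarrow> real. continuous_on K w \<and> (\<forall>x. w x \<ge> 0) \<and> (\<forall>x\<in>K. w x > 0 \<longleftrightarrow> x \<in> V)"
    using openin_continuous_positive_exactly[OF assms] by metis
  obtain w :: "'a set \<Rightarrow> 'a \<Rightarrow> real"
    where w: "\<forall>V\<in>\<V>. continuous_on K (w V) \<and> (\<forall>x. w V x \<ge> 0) \<and> (\<forall>x\<in>K. w V x > 0 \<longleftrightarrow> x \<in> V)"
    using bchoice[OF weights] by blast
  show thesis
    by (rule that[of w]) (use w in blast)+
qed

lemma covering_dim_le_fine_cover:
  fixes K :: "'a::metric_space set"
  assumes "compact K" "covering_dim_le K n" "\<delta> > 0"
  obtains \<V> where "finite \<V>" "\<And>V. V \<in> \<V> \<Longrightarrow> openin (top_of_set K) V" "\<Union>\<V> = K"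
    "\<And>V x y. V \<in> \<V> \<Longrightarrow> x \<in> V \<Longrightarrow> y \<in> V \<Longrightarrow> dist x y < \<delta>"
    "\<And>x. x \<in> K \<Longrightarrow> card {V \<in> \<V>. x \<in> V} \<le> n + 1"
proof -
  obtain T where T: "T \<subseteq> K" "finite T" "K \<subseteq> (\<Union>x\<in>T. ball x (\<delta>/2))"
  proof (rule compactE_image[OF assms(1), of K "\<lambda>x. ball x (\<delta>/2)"])
    show "K \<subseteq> (\<Union>x\<in>K. ball x (\<delta>/2))"
      using assms(3) by auto
  qed auto
  define \<U> where "\<U> = (\<lambda>x. K \<inter> ball x (\<delta>/2)) ` T"
  have \<U>: "finite \<U> \<and> (\<forall>U\<in>\<U>. openin (top_of_set K) U) \<and> \<Union>\<U> = K"
    using T by (auto simp: \<U>_def openin_open_Int)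
  obtain \<V> where \<V>: "finite \<V>" "\<forall>V\<in>\<V>. openin (top_of_set K) V" "\<Union>\<V> = K"
      "\<forall>V\<in>\<V>. \<exists>U\<in>\<U>. V \<subseteq> U" "\<forall>x\<in>K. card {V \<in> \<V>. x \<in> V} \<le> n + 1"
    using assms(2)[unfolded covering_dim_le_def, rule_format, OF \<U>] by (elim exE conjE)
  have "dist x y < \<delta>" if V: "V \<in> \<V>" "x \<in> V" "y \<in> V" for V x y
  proof -
    obtain z where "V \<subseteq> ball z (\<delta>/2)"
      using \<V>(4) V(1) unfolding \<U>_def by blast
    then have "dist x z < \<delta>/2" "dist y z < \<delta>/2"
      using V(2,3) by (auto simp: dist_commute)
    then show ?thesis
      by (rule dist_triangle_half_l)
  qed
  then show thesis
    using \<V> by (intro that) auto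
qed

lemma nonvanishing_blend_over_cover:
  fixes K :: "'a::metric_space set" and c :: "'a set \<Rightarrow> 'b::real_normed_vector"
  assumes "finite \<V>" "\<And>V. V \<in> \<V> \<Longrightarrow> openin (top_of_set K) V" "\<Union>\<V> = K"
    and "\<And>x. x \<in> K \<Longrightarrow> card {V \<in> \<V>. x \<in> V} \<le> 2"
    and "\<And>V. V \<in> \<V> \<Longrightarrow> c V \<noteq> 0" "\<And>V W. V \<in> \<V> \<Longrightarrow> W \<in> \<V> \<Longrightarrow> V \<noteq> W \<Longrightarrow> c V \<notin> span {c W}"
  obtains g where "continuous_on K g" "\<And>x. x \<in> K \<Longrightarrow> g x \<noteq> 0"
    "\<And>x. x \<in> K \<Longrightarrow> g x \<in> convex hull (c ` {V \<in> \<V>. x \<in> V})"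
proof -
  obtain w :: "'a set \<Rightarrow> 'a \<Rightarrow> real"
    where w: "\<And>V. V \<in> \<V> \<Longrightarrow> continuous_on K (w V)" "\<And>V x. V \<in> \<V> \<Longrightarrow> w V x \<ge> 0"
      "\<And>V x. V \<in> \<V> \<Longrightarrow> x \<in> K \<Longrightarrow> w V x > 0 \<longleftrightarrow> x \<in> V"
    using openin_family_continuous_positive_exactly[of \<V> K] assms(2) by blast
  define \<V>x where "\<V>x x = {V \<in> \<V>. x \<in> V}" for x
  define s where "s x = (\<Sum>V\<in>\<V>. w V x)" for x
  define g where "g x = inverse (s x) *\<^sub>R (\<Sum>V\<in>\<V>. w V x *\<^sub>R c V)" for x
  have \<V>x: "finite (\<V>x x)" "\<V>x x \<subseteq> \<V>" and \<V>x_ne: "x \<in> K \<Longrightarrow> \<V>x x \<noteq> {}" for x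
    using assms(1,3) by (auto simp: \<V>x_def)
  have restrict: "(\<Sum>V\<in>\<V>. F V) = (\<Sum>V\<in>\<V>x x. F V)" if "x \<in> K" "\<And>V. w V x = 0 \<Longrightarrow> F V = 0"
    for x and F :: "'a set \<Rightarrow> 'c::comm_monoid_add"
  proof (rule sum.mono_neutral_right[OF assms(1) \<V>x(2)])
    show "\<forall>V\<in>\<V> - \<V>x x. F V = 0"
    proof
      fix V assume "V \<in> \<V> - \<V>x x"
      then have "w V x = 0"
        using w(2,3)[of V x] that(1) by (force simp: \<V>x_def)
      then show "F V = 0"
        by (rule that(2))
    qed
  qed
  have s_pos: "s x > 0" if x: "x \<in> K" for x
  proof -
    obtain V where "V \<in> \<V>" "x \<in> V"
      using assms(3) x by blast
    then show ?thesis
      unfolding s_def using w(2,3) x by (intro sum_pos2[OF assms(1)]) auto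
  qed
  show thesis
  proof
    have "continuous_on K s"
      unfolding s_def by (intro continuous_on_sum w(1))
    moreover have "continuous_on K (\<lambda>x. \<Sum>V\<in>\<V>. w V x *\<^sub>R c V)"
      by (intro continuous_on_sum continuous_on_scaleR continuous_on_const w(1))
    ultimately show "continuous_on K g"
      unfolding g_def using s_pos by (intro continuous_on_scaleR continuous_on_inverse) force+
    fix x assume x: "x \<in> K"
    have g_eq: "g x = inverse (s x) *\<^sub>R (\<Sum>V\<in>\<V>x x. w V x *\<^sub>R c V)"
      by (simp add: g_def restrict[OF x])
    have "(\<Sum>V\<in>\<V>x x. w V x *\<^sub>R c V) \<noteq> 0"
      using \<V>x[of x] \<V>x_ne[OF x] assms(4)[OF x] w(3)[OF _ x] assms(5,6)
      by (intro sum_scaleR_nonzero_noncollinear) (auto simp: \<V>x_def)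
    then show "g x \<noteq> 0"
      using g_eq s_pos[OF x] by simp
    have s_eq: "s x = (\<Sum>V\<in>\<V>x x. w V x)"
      by (simp add: s_def restrict[OF x])
    have "g x \<in> convex hull (c ` \<V>x x)"
      unfolding g_eq s_eq using \<V>x(2) s_pos[OF x] s_eq
      by (intro weighted_mean_in_convex_hull[OF \<V>x(1)]) (auto intro: w(2))
    then show "g x \<in> convex hull (c ` {V \<in> \<V>. x \<in> V})"
      unfolding \<V>x_def .
  qed
qed

lemma covering_dim_le_1_approx_nonvanishing:
  fixes f :: "'a::metric_space \<Rightarrow> 'b::euclidean_space"
  assumes "compact K" "covering_dim_le K 1" "DIM('b) \<ge> 2" "continuous_on K f" "\<eta> > 0"
  obtains g where "continuous_on K g" "\<And>x. x \<in> K \<Longrightarrow> g x \<noteq> 0"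
    "\<And>x. x \<in> K \<Longrightarrow> dist (f x) (g x) < \<eta>"
proof -
  obtain \<delta> where \<delta>: "\<delta> > 0" "\<And>x y. x \<in> K \<Longrightarrow> y \<in> K \<Longrightarrow> dist y x < \<delta> \<Longrightarrow> dist (f y) (f x) < \<eta>/2"
    using compact_uniformly_continuous[OF assms(4,1)] assms(5)
    unfolding uniformly_continuous_on_def by (metis half_gt_zero)
  obtain \<V> where \<V>: "finite \<V>" "\<And>V. V \<in> \<V> \<Longrightarrow> openin (top_of_set K) V" "\<Union>\<V> = K"
    "\<And>V x y. V \<in> \<V> \<Longrightarrow> x \<in> V \<Longrightarrow> y \<in> V \<Longrightarrow> dist x y < \<delta>"
    "\<And>x. x \<in> K \<Longrightarrow> card {V \<in> \<V>. x \<in> V} \<le> 1 + 1"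
    by (fact covering_dim_le_fine_cover[OF assms(1,2) \<delta>(1)])
  define p where "p V = f (SOME x. x \<in> V)" for V
  have near_p: "dist (f y) (p V) < \<eta>/2" if V: "V \<in> \<V>" "y \<in> V" for V y
  proof -
    have some_in: "(SOME x. x \<in> V) \<in> V"
      using V(2) by (rule someI)
    have "V \<subseteq> K"
      using \<V>(3) V(1) by blast
    then show ?thesis
      unfolding p_def using \<delta>(2)[of "SOME x. x \<in> V" y] \<V>(4)[OF V some_in] V(2) some_in by auto
  qed
  obtain c :: "'a set \<Rightarrow> 'b" where c: "\<And>V. V \<in> \<V> \<Longrightarrow> dist (c V) (p V) < \<eta>/2"
    "\<And>V. V \<in> \<V> \<Longrightarrow> c V \<noteq> 0" "\<And>V W. V \<in> \<V> \<Longrightarrow> W \<in> \<V> \<Longrightarrow> V \<noteq> W \<Longrightarrow> c V \<notin> span {c W}"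
    by (fact exists_pairwise_noncollinear_near[OF assms(3) \<V>(1) half_gt_zero[OF assms(5)]])
  have order: "card {V \<in> \<V>. x \<in> V} \<le> 2" if "x \<in> K" for x
    using \<V>(5)[OF that] by simp
  obtain g where g: "continuous_on K g" "\<And>x. x \<in> K \<Longrightarrow> g x \<noteq> 0"
    "\<And>x. x \<in> K \<Longrightarrow> g x \<in> convex hull (c ` {V \<in> \<V>. x \<in> V})"
    using nonvanishing_blend_over_cover[of \<V> K c, OF \<V>(1,2,3) order c(2,3)] by blast
  show thesis
  proof (rule that[OF g(1,2)])
    fix x assume x: "x \<in> K"
    have "c ` {V \<in> \<V>. x \<in> V} \<subseteq> ball (f x) \<eta>"
    proof clarify
      fix V assume V: "V \<in> \<V>" "x \<in> V"
      have "dist (f x) (c V) \<le> dist (f x) (p V) + dist (c V) (p V)"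
        by (rule dist_triangle2)
      also have "\<dots> < \<eta>"
        using near_p[OF V] c(1)[OF V(1)] by linarith
      finally show "c V \<in> ball (f x) \<eta>"
        by simp
    qed
    then have "convex hull (c ` {V \<in> \<V>. x \<in> V}) \<subseteq> ball (f x) \<eta>"
      by (simp add: convex_ball hull_minimal)
    then show "dist (f x) (g x) < \<eta>"
      using g(3)[OF x] by auto
  qed
qed

lemma compact_norm_bounded_below:
  fixes f :: "'a::topological_space \<Rightarrow> 'b::real_normed_vector"
  assumes "compact J" "continuous_on J f" "\<forall>x\<in>J. f x \<noteq> 0"
  obtains m where "m > 0" "\<And>x. x \<in> J \<Longrightarrow> m \<le> norm (f x)"
proof (cases "J = {}")
  case True
  then show thesis
    using that[of 1] by simp
next
  case False
  obtain x0 where "x0 \<in> J" "\<And>x. x \<in> J \<Longrightarrow> norm (f x0) \<le> norm (f x)"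
    using continuous_attains_inf[OF assms(1) False continuous_on_norm[OF assms(2)]] by blast
  then show thesis
    using assms(3) by (intro that[of "norm (f x0)"]) auto
qed

lemma norm_bounded_below_near:
  fixes f :: "'a::metric_space \<Rightarrow> 'b::real_normed_vector"
  assumes "compact K" "J \<subseteq> K" "J \<noteq> {}" "continuous_on K f"
    and "\<And>x. x \<in> J \<Longrightarrow> m \<le> norm (f x)" "m > 0"
  obtains \<rho> where "\<rho> > 0" "\<And>x. x \<in> K \<Longrightarrow> infdist x J < \<rho> \<Longrightarrow> norm (f x) > m/2"
proof -
  obtain \<rho> where \<rho>: "\<rho> > 0" "\<And>x y. x \<in> K \<Longrightarrow> y \<in> K \<Longrightarrow> dist y x < \<rho> \<Longrightarrow> dist (f y) (f x) < m/2"
    using compact_uniformly_continuous[OF assms(4,1)] assms(6)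
    unfolding uniformly_continuous_on_def by (metis half_gt_zero)
  have "norm (f x) > m/2" if x: "x \<in> K" "infdist x J < \<rho>" for x
  proof -
    obtain y where y: "y \<in> J" "dist x y < \<rho>"
      using infdist_lessE[OF assms(3) x(2)] by blast
    have "y \<in> K"
      using y(1) assms(2) by blast
    then have "dist (f x) (f y) < m/2"
      using \<rho>(2) x(1) y(2) by blast
    then show ?thesis
      using assms(5)[OF y(1)] norm_triangle_ineq3[of "f x" "f y"] unfolding dist_norm by arith
  qed
  with \<rho>(1) show thesis
    by (rule that)
qed

lemma nonvanishing_interpolation_near:
  fixes f g1 :: "'a::metric_space \<Rightarrow> 'b::real_normed_vector"
  assumes "\<rho> > 0" "continuous_on K f" "continuous_on K g1" "\<And>x. x \<in> K \<Longrightarrow> g1 x \<noteq> 0"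
    and "\<And>x. x \<in> K \<Longrightarrow> infdist x J < \<rho> \<Longrightarrow> norm (f x) > m"
    and "\<And>x. x \<in> K \<Longrightarrow> dist (f x) (g1 x) < m"
  obtains g where "continuous_on K g" "\<And>x. x \<in> K \<Longrightarrow> g x \<noteq> 0" "\<And>x. x \<in> J \<Longrightarrow> g x = f x"
    "\<And>x. dist (f x) (g x) \<le> dist (f x) (g1 x)"
proof -
  \<comment> \<open>\<open>\<phi>\<close> vanishes on J and is 1 at distance \<open>\<ge> \<rho>\<close> from J; nearer to J, \<open>|f| > m\<close> keeps g off 0\<close>
  define \<phi> where "\<phi> x = min 1 (infdist x J / \<rho>)" for x
  define g where "g x = f x + \<phi> x *\<^sub>R (g1 x - f x)" for x
  have \<phi>: "0 \<le> \<phi> x" "\<phi> x \<le> 1" for x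
    using assms(1) by (auto simp: \<phi>_def infdist_nonneg)
  have g_close: "dist (f x) (g x) \<le> dist (f x) (g1 x)" for x
    using \<phi>[of x] by (simp add: g_def dist_norm norm_minus_commute mult_left_le_one_le)
  show thesis
  proof (rule that[OF _ _ _ g_close])
    have "continuous_on K \<phi>"
      unfolding \<phi>_def using assms(1)
      by (intro continuous_on_min continuous_on_divide continuous_on_infdist continuous_on_id
          continuous_on_const) auto
    then show "continuous_on K g"
      unfolding g_def by (intro continuous_on_add continuous_on_scaleR continuous_on_diff assms(2,3))
    show "g x = f x" if "x \<in> J" for x
      using that by (simp add: g_def \<phi>_def)
    show "g x \<noteq> 0" if x: "x \<in> K" for x
    proof (cases "\<phi> x = 1")
      case True
      then show ?thesis
        using assms(4)[OF x] by (simp add: g_def)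
    next
      case False
      then have "infdist x J / \<rho> < 1"
        unfolding \<phi>_def by (metis min_def not_le)
      then have "norm (f x) > m"
        using assms(1,5) x by (simp add: divide_less_eq)
      moreover have "dist (f x) (g x) < m"
        using g_close[of x] assms(6)[OF x] by linarith
      ultimately show ?thesis
        by (auto simp: dist_norm)
    qed
  qed
qed

lemma covering_dim_le_1_approx_nonvanishing_extending:
  fixes f :: "'a::metric_space \<Rightarrow> 'b::euclidean_space"
  assumes "compact K" "covering_dim_le K 1" "DIM('b) \<ge> 2" "J \<subseteq> K" "compact J"
    and "continuous_on K f" "\<forall>x\<in>J. f x \<noteq> 0" "\<epsilon> > 0"
  obtains g where "continuous_on K g" "\<And>x. x \<in> K \<Longrightarrow> g x \<noteq> 0" "\<And>x. x \<in> J \<Longrightarrow> g x = f x"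
    "\<And>x. x \<in> K \<Longrightarrow> dist (f x) (g x) < \<epsilon>"
proof (cases "J = {}")
  case True
  obtain g where "continuous_on K g" "\<And>x. x \<in> K \<Longrightarrow> g x \<noteq> 0"
    "\<And>x. x \<in> K \<Longrightarrow> dist (f x) (g x) < \<epsilon>"
    by (fact covering_dim_le_1_approx_nonvanishing[OF assms(1-3,6,8)])
  then show thesis
    using True by (intro that) auto
next
  case False
  obtain m where m: "m > 0" "\<And>x. x \<in> J \<Longrightarrow> m \<le> norm (f x)"
    using compact_norm_bounded_below[OF assms(5) continuous_on_subset[OF assms(6,4)] assms(7)] by blast
  obtain \<rho> where \<rho>: "\<rho> > 0" "\<And>x. x \<in> K \<Longrightarrow> infdist x J < \<rho> \<Longrightarrow> norm (f x) > m/2"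
    using norm_bounded_below_near[OF assms(1,4) False assms(6) m(2,1)] by blast
  have "min \<epsilon> (m/2) > 0"
    using assms(8) m(1) by simp
  obtain g1 where g1: "continuous_on K g1" "\<And>x. x \<in> K \<Longrightarrow> g1 x \<noteq> 0"
    "\<And>x. x \<in> K \<Longrightarrow> dist (f x) (g1 x) < min \<epsilon> (m/2)"
    by (fact covering_dim_le_1_approx_nonvanishing[OF assms(1-3,6) \<open>min \<epsilon> (m/2) > 0\<close>])
  have g1_close: "dist (f x) (g1 x) < m/2" "dist (f x) (g1 x) < \<epsilon>" if "x \<in> K" for x
    using g1(3)[OF that] by simp_all
  obtain g where g: "continuous_on K g" "\<And>x. x \<in> K \<Longrightarrow> g x \<noteq> 0" "\<And>x. x \<in> J \<Longrightarrow> g x = f x"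
    "\<And>x. dist (f x) (g x) \<le> dist (f x) (g1 x)"
    using nonvanishing_interpolation_near[OF \<rho>(1) assms(6) g1(1,2) \<rho>(2) g1_close(1)] by blast
  show thesis
  proof (rule that[OF g(1-3)])
    show "dist (f x) (g x) < \<epsilon>" if "x \<in> K" for x
      using g(4)[of x] g1_close(2)[OF that] by linarith
  qed
qed

lemma Tietze_real:
  fixes f :: "'a::metric_space \<Rightarrow> real"
  assumes "continuous_on S f" "closedin (top_of_set U) S" "r \<ge> 0" "\<forall>x\<in>S. \<bar>f x\<bar> \<le> r"
  obtains g where "continuous_on U g" "\<And>x. x \<in> S \<Longrightarrow> g x = f x" "\<And>x. x \<in> U \<Longrightarrow> \<bar>g x\<bar> \<le> r"
proof -
  have normal: "normal_space (top_of_set U)"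
    by (simp add: metrizable_imp_normal_space metrizable_space_euclidean metrizable_space_subtopology)
  have cont: "continuous_map (subtopology (top_of_set U) S) euclideanreal f"
    using closedin_imp_subset[OF assms(2)] assms(1) by (simp add: subtopology_subtopology Int_absorb1)
  have bounded: "f ` S \<subseteq> {-r..r}"
    using assms(4) by (auto simp: abs_le_iff)
  obtain g where "continuous_map (top_of_set U) euclideanreal g"
      "\<And>x. x \<in> S \<Longrightarrow> g x = f x" "g ` topspace (top_of_set U) \<subseteq> {-r..r}"
    using Tietze_extension_closed_real_interval[OF normal assms(2) cont bounded] assms(3) by auto
  then show thesis
    by (intro that[of g]) (auto simp: abs_le_iff)
qed

lemma Tietze_complex:
  fixes f :: "'a::metric_space \<Rightarrow> complex"
  assumes "continuous_on S f" "closedin (top_of_set U) S" "r \<ge> 0" "\<forall>x\<in>S. norm (f x) \<le> r"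
  obtains g where "continuous_on U g" "\<And>x. x \<in> S \<Longrightarrow> g x = f x" "\<And>x. x \<in> U \<Longrightarrow> norm (g x) \<le> 2 * r"
proof -
  have Re_bound: "\<forall>x\<in>S. \<bar>Re (f x)\<bar> \<le> r" and Im_bound: "\<forall>x\<in>S. \<bar>Im (f x)\<bar> \<le> r"
    using assms(4) abs_Re_le_cmod abs_Im_le_cmod order_trans by blast+
  obtain g1 where g1: "continuous_on U g1" "\<And>x. x \<in> S \<Longrightarrow> g1 x = Re (f x)" "\<And>x. x \<in> U \<Longrightarrow> \<bar>g1 x\<bar> \<le> r"
    by (fact Tietze_real[OF continuous_on_Re[OF assms(1)] assms(2,3) Re_bound])
  obtain g2 where g2: "continuous_on U g2" "\<And>x. x \<in> S \<Longrightarrow> g2 x = Im (f x)" "\<And>x. x \<in> U \<Longrightarrow> \<bar>g2 x\<bar> \<le> r"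
    by (fact Tietze_real[OF continuous_on_Im[OF assms(1)] assms(2,3) Im_bound])
  show thesis
  proof
    show "continuous_on U (\<lambda>x. Complex (g1 x) (g2 x))"
      unfolding Complex_eq
      by (intro continuous_on_add continuous_on_mult continuous_on_of_real continuous_on_const g1(1) g2(1))
    show "Complex (g1 x) (g2 x) = f x" if "x \<in> S" for x
      using g1(2)[OF that] g2(2)[OF that] by (simp add: complex_eq_iff)
    show "norm (Complex (g1 x) (g2 x)) \<le> 2 * r" if "x \<in> U" for x
      using cmod_le[of "Complex (g1 x) (g2 x)"] g1(3)[OF that] g2(3)[OF that] by simp
  qed
qed

lemma Tietze_complex_perturb:
  fixes f h :: "'a::metric_space \<Rightarrow> complex"
  assumes "continuous_on U f" "closedin (top_of_set U) S" "continuous_on S h"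
    and "r \<ge> 0" "\<forall>x\<in>S. norm (f x - h x) \<le> r"
  obtains f1 where "continuous_on U f1" "\<And>x. x \<in> S \<Longrightarrow> f1 x = h x"
    "\<And>x. x \<in> U \<Longrightarrow> norm (f x - f1 x) \<le> 2 * r"
proof -
  have "continuous_on S (\<lambda>x. f x - h x)"
    using continuous_on_subset[OF assms(1) closedin_imp_subset[OF assms(2)]] assms(3)
    by (rule continuous_on_diff)
  then obtain D where D: "continuous_on U D" "\<And>x. x \<in> S \<Longrightarrow> D x = f x - h x"
    "\<And>x. x \<in> U \<Longrightarrow> norm (D x) \<le> 2 * r"
    using Tietze_complex assms(2,4,5) by blast
  show thesis
  proof (rule that[of "\<lambda>x. f x - D x"])
    show "continuous_on U (\<lambda>x. f x - D x)"
      using assms(1) D(1) by (rule continuous_on_diff)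
    show "f x - D x = h x" if "x \<in> S" for x
      using D(2)[OF that] by simp
    show "norm (f x - (f x - D x)) \<le> 2 * r" if "x \<in> U" for x
      using D(3)[OF that] by simp
  qed
qed

lemma uniform_algebra_restr_saturated: "uniform_algebra J B \<Longrightarrow> restr_saturated J B"
  unfolding uniform_algebra_def by (elim conjE)

lemma uniform_algebra_continuous_on: "uniform_algebra J B \<Longrightarrow> f \<in> B \<Longrightarrow> continuous_on J f"
  unfolding uniform_algebra_def by (elim conjE) (erule bspec)

lemma restr_saturatedD:
  assumes "restr_saturated J B" "f \<in> B" "\<And>x. x \<in> J \<Longrightarrow> f x = g x"
  shows "g \<in> B"
  using assms unfolding restr_saturated_def by blast

lemma invertible_in_nonzero:
  assumes "invertible_in S A g" "x \<in> S"
  shows "g x \<noteq> 0"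
  using assms unfolding invertible_in_def by (metis mult_zero_left zero_neq_one)

lemma invertible_in_continuous_extension:
  assumes "restr_saturated J B" "invertible_in J B g0"
    and "continuous_on K g" "\<And>x. x \<in> K \<Longrightarrow> g x \<noteq> 0" "\<And>x. x \<in> J \<Longrightarrow> g x = g0 x"
  shows "invertible_in K {f. continuous_on K f \<and> f \<in> B} g"
proof -
  obtain h0 where g0: "g0 \<in> B" and h0: "h0 \<in> B" "\<And>x. x \<in> J \<Longrightarrow> g0 x * h0 x = 1"
    using assms(2) unfolding invertible_in_def by blast
  have "g \<in> B"
    using restr_saturatedD[OF assms(1) g0] assms(5) by simp
  moreover have "(\<lambda>x. 1 / g x) \<in> B"
  proof (rule restr_saturatedD[OF assms(1) h0(1)])
    fix x assume x: "x \<in> J"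
    show "h0 x = 1 / g x"
      using h0(2)[OF x] assms(5)[OF x] invertible_in_nonzero[OF assms(2) x]
      by (simp add: eq_divide_eq mult.commute)
  qed
  moreover have "continuous_on K (\<lambda>x. 1 / g x)"
    using assms(3,4) by (intro continuous_on_divide continuous_on_const) auto
  ultimately show ?thesis
    unfolding invertible_in_def using assms(3,4) by (intro conjI bexI[of _ "\<lambda>x. 1 / g x"]) auto
qed

theorem lemma8p1:
  fixes K J :: "'a::metric_space set" and B :: "('a \<Rightarrow> complex) set"
  assumes "compact K" and "covering_dim_le K 1"
    and "compact J" and "J \<subseteq> K"
    and "uniform_algebra J B" and "dense_invertibles J B"
  shows "dense_invertibles K {f. continuous_on K f \<and> f \<in> B}"
  unfolding dense_invertibles_def
proof (intro ballI allI impI)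
  fix f e assume f: "f \<in> {f. continuous_on K f \<and> f \<in> B}" and e: "(e::real) > 0"
  have "e/6 > 0"
    using e by simp
  then obtain g0 where g0: "invertible_in J B g0" "\<forall>x\<in>J. norm (f x - g0 x) < e/6"
    using assms(6) f unfolding dense_invertibles_def by blast
  have "continuous_on J g0"
    using g0(1) uniform_algebra_continuous_on[OF assms(5)] unfolding invertible_in_def by blast
  moreover have "closedin (top_of_set K) J"
    using closed_subset[OF assms(4) compact_imp_closed[OF assms(3)]] .
  moreover have "e/6 \<ge> 0" "\<forall>x\<in>J. norm (f x - g0 x) \<le> e/6"
    using e g0(2) by (auto simp: less_imp_le)
  ultimately obtain f1 where f1: "continuous_on K f1" "\<And>x. x \<in> J \<Longrightarrow> f1 x = g0 x"
    "\<And>x. x \<in> K \<Longrightarrow> norm (f x - f1 x) \<le> 2 * (e/6)"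
    using Tietze_complex_perturb[of K f J g0 "e/6"] f by blast
  have "DIM(complex) \<ge> 2" "\<forall>x\<in>J. f1 x \<noteq> 0" "e/3 > 0"
    using f1(2) invertible_in_nonzero[OF g0(1)] e by simp_all
  then obtain g where g: "continuous_on K g" "\<And>x. x \<in> K \<Longrightarrow> g x \<noteq> 0" "\<And>x. x \<in> J \<Longrightarrow> g x = f1 x"
    "\<And>x. x \<in> K \<Longrightarrow> dist (f1 x) (g x) < e/3"
    using covering_dim_le_1_approx_nonvanishing_extending[OF assms(1,2) _ assms(4,3) f1(1)] by blast
  show "\<exists>g. invertible_in K {f. continuous_on K f \<and> f \<in> B} g \<and> (\<forall>x\<in>K. norm (f x - g x) < e)"
  proof (intro exI conjI ballI)
    show "invertible_in K {f. continuous_on K f \<and> f \<in> B} g"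
      using invertible_in_continuous_extension[OF uniform_algebra_restr_saturated[OF assms(5)] g0(1) g(1,2)]
        g(3) f1(2) by simp
    show "norm (f x - g x) < e" if "x \<in> K" for x
      using norm_triangle_ineq[of "f x - f1 x" "f1 x - g x"] f1(3)[OF that] g(4)[OF that] e
      by (simp add: dist_norm)
  qed
qed

end
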